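(* Let $p>1$, $1/p+1/q=1$, let $\{(x_i,y_i)\}_{i=1}^n\subset\mathbb{R}^d\times\{\pm1\}$ be linearly separable with $\max_i\|x_i\|_q<C$, and let $L(w)=\frac1n\sum_i\ell(y_i\langle w,x_i\rangle)$ with $\ell$ decreasing, convex, not attaining its minimum, $\inf\ell=0$. If the regularized direction $\bar w^{\mathrm{reg}}_p$ exists, then for every $\alpha>0$ there exists $r_\alpha$ such that for every $w\in\mathbb{R}^d$ with $\|w\|_p>r_\alpha$, $$L\big((1+\alpha)\|w\|_p\,\bar w^{\mathrm{reg}}_p\big)\le L(w).$$
   Context: The regularization path is $\bar w_p(B)=\arg\min_{\|w\|_p\le B}L(w)$ for $B>0$; if $\lim_{B\to\infty}\bar w_p(B)/B$ exists it is called the regularized direction $\bar w^{\mathrm{reg}}_p$. *)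

theory Defs
  imports "HOL-Analysis.Analysis"
begin

definition lp_norm :: "real \<Rightarrow> real ^ 'd \<Rightarrow> real" where
  "lp_norm p w = (\<Sum>i\<in>UNIV. \<bar>w $ i\<bar> powr p) powr (1 / p)"

definition emp_loss ::
  "(real \<Rightarrow> real) \<Rightarrow> nat \<Rightarrow> (nat \<Rightarrow> real ^ 'd) \<Rightarrow> (nat \<Rightarrow> real) \<Rightarrow> real ^ 'd \<Rightarrow> real" where
  "emp_loss l n x y w = (1 / real n) * (\<Sum>i<n. l (y i * (w \<bullet> x i)))"

definition lin_separable :: "nat \<Rightarrow> (nat \<Rightarrow> real ^ 'd) \<Rightarrow> (nat \<Rightarrow> real) \<Rightarrow> bool" where
  "lin_separable n x y \<longleftrightarrow> (\<exists>w. \<forall>i<n. y i * (w \<bullet> x i) > 0)"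

definition is_reg_path ::
  "real \<Rightarrow> (real ^ 'd \<Rightarrow> real) \<Rightarrow> (real \<Rightarrow> real ^ 'd) \<Rightarrow> bool" where
  "is_reg_path p L wbar \<longleftrightarrow>
     (\<forall>B>0. lp_norm p (wbar B) \<le> B \<and> (\<forall>w. lp_norm p w \<le> B \<longrightarrow> L (wbar B) \<le> L w))"

end

theory Submission
  imports Defs
begin

text \<open>Put \<open>B = \<parallel>w\<parallel>\<^sub>p\<close>; since \<open>L w \<ge> L (wbar B)\<close>, it suffices to show
  \<open>L ((1 + \<alpha>) B wreg) \<le> L (wbar B)\<close> for large \<open>B\<close>. The margins of \<open>wbar B / B\<close> tend to
  the margins \<open>m\<^sub>i\<close> of \<open>wreg\<close>.

  If \<open>l\<close> decreases at least linearly, convexity of \<open>L\<close> along rays makes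
  \<open>(L (wbar B) - l 0) / B\<close> nondecreasing with a negative supremum \<open>K\<close>, and
  \<open>L (T wreg) \<le> l 0 + T K\<close> for all \<open>T > 0\<close>; this gives the claim.

  Otherwise, comparing \<open>wbar B\<close> with the feasible perturbation \<open>(1 - \<delta>) wbar B + \<delta> B u\<close>
  towards a separator \<open>u\<close> shows that all \<open>m\<^sub>i \<ge> 0\<close> and some \<open>m\<^sub>i > 0\<close>. If all \<open>m\<^sub>i > 0\<close>,
  monotonicity of \<open>l\<close> suffices. If some \<open>m\<^sub>j = 0\<close>, the same perturbation shows that the drop
  of \<open>l\<close> over \<open>[\<rho> t / r, \<rho> t]\<close> is at most \<open>K \<rho>\<close> times its drop over \<open>[t / r, t]\<close>; hence
  the loss \<open>l 0 - l (\<eta> B)\<close> on the vanishing margins is negligible against the gain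
  \<open>l (c\<^sub>1 B) - l (c\<^sub>2 B)\<close> on a positive margin.\<close>

section \<open>Balls of the \<open>l\<^sub>p\<close> norm\<close>

lemma lp_norm_nonneg: "0 \<le> lp_norm p w"
  unfolding lp_norm_def by simp

lemma lp_norm_zero [simp]: "lp_norm p 0 = 0"
  unfolding lp_norm_def by simp

lemma lp_norm_scaleR:
  assumes "p > 0" "c \<ge> 0"
  shows "lp_norm p (c *\<^sub>R w) = c * lp_norm p w"
proof -
  have "(\<Sum>i\<in>UNIV. \<bar>(c *\<^sub>R w) $ i\<bar> powr p) = c powr p * (\<Sum>i\<in>UNIV. \<bar>w $ i\<bar> powr p)"
    using assms by (simp add: abs_mult powr_mult sum_distrib_left)
  then have "lp_norm p (c *\<^sub>R w) = (c powr p) powr (1/p) * lp_norm p w"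
    unfolding lp_norm_def by (simp add: powr_mult)
  also have "(c powr p) powr (1/p) = c"
    using assms by (simp add: powr_powr)
  finally show ?thesis .
qed

lemma lp_norm_le_iff:
  assumes "p > 0" "R \<ge> 0"
  shows "lp_norm p w \<le> R \<longleftrightarrow> (\<Sum>i\<in>UNIV. \<bar>w $ i\<bar> powr p) \<le> R powr p"
proof
  let ?S = "\<Sum>i\<in>UNIV. \<bar>w $ i\<bar> powr p"
  assume "lp_norm p w \<le> R"
  then have "(?S powr (1/p)) powr p \<le> R powr p"
    unfolding lp_norm_def using assms by (intro powr_mono2) auto
  then show "?S \<le> R powr p"
    using assms by (simp add: powr_powr sum_nonneg)
next
  let ?S = "\<Sum>i\<in>UNIV. \<bar>w $ i\<bar> powr p"
  assume "?S \<le> R powr p"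
  then have "?S powr (1/p) \<le> (R powr p) powr (1/p)"
    using assms by (intro powr_mono2) (auto simp: sum_nonneg)
  then show "lp_norm p w \<le> R"
    unfolding lp_norm_def using assms by (simp add: powr_powr)
qed

lemma convex_on_powr_nonneg:
  fixes p :: real
  assumes "p \<ge> 1"
  shows "convex_on {0..} (\<lambda>x. x powr p)"
proof (rule convex_on_linorderI)
  fix t a b :: real
  assume t: "0 < t" "t < 1" and ab: "a \<in> {0..}" "b \<in> {0..}" "a < b"
  have sub: "(s * c) powr p \<le> s * c powr p" if "0 \<le> s" "s \<le> 1" "0 \<le> c" for s c :: real
  proof -
    have "s powr p \<le> s powr 1"
      using that assms by (intro powr_mono') auto
    then show ?thesis
      using that by (simp add: powr_mult mult_right_mono)
  qed
  show "((1 - t) *\<^sub>R a + t *\<^sub>R b) powr p \<le> (1 - t) * a powr p + t * b powr p"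
  proof (cases "a = 0")
    case True
    then show ?thesis
      using sub[of t b] t ab by simp
  next
    case False
    then have "a > 0" "b > 0"
      using ab by auto
    with convex_onD[OF powr_convex[OF assms], of t a b] t show ?thesis
      by simp
  qed
qed simp

lemma convex_lp_ball:
  assumes p: "p \<ge> 1"
  shows "convex {w :: real ^ 'd. lp_norm p w \<le> R}"
proof (cases "R \<ge> 0")
  case False
  then have "{w :: real ^ 'd. lp_norm p w \<le> R} = {}"
    using lp_norm_nonneg[of p] False by (metis (mono_tags) Collect_empty_eq order_trans)
  then show ?thesis
    by simp
next
  case R: True
  have ball_iff: "lp_norm p w \<le> R \<longleftrightarrow> (\<Sum>i\<in>UNIV. \<bar>w $ i\<bar> powr p) \<le> R powr p" for w :: "real ^ 'd"
    using lp_norm_le_iff[of p R w] p R by simp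
  show ?thesis
  proof (rule convexI)
    fix a b :: "real ^ 'd" and s t :: real
    assume a: "a \<in> {w. lp_norm p w \<le> R}" and b: "b \<in> {w. lp_norm p w \<le> R}"
      and st: "0 \<le> s" "0 \<le> t" "s + t = 1"
    have "(\<Sum>i\<in>UNIV. \<bar>(s *\<^sub>R a + t *\<^sub>R b) $ i\<bar> powr p)
        \<le> (\<Sum>i\<in>UNIV. s * \<bar>a $ i\<bar> powr p + t * \<bar>b $ i\<bar> powr p)"
    proof (rule sum_mono)
      fix i
      have "\<bar>(s *\<^sub>R a + t *\<^sub>R b) $ i\<bar> \<le> s * \<bar>a $ i\<bar> + t * \<bar>b $ i\<bar>"
        using st by (simp add: abs_triangle_ineq[THEN order_trans] abs_mult)
      then have "\<bar>(s *\<^sub>R a + t *\<^sub>R b) $ i\<bar> powr p \<le> (s * \<bar>a $ i\<bar> + t * \<bar>b $ i\<bar>) powr p"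
        using p by (intro powr_mono2) auto
      also have "\<dots> \<le> s * \<bar>a $ i\<bar> powr p + t * \<bar>b $ i\<bar> powr p"
        using convex_onD[OF convex_on_powr_nonneg[OF p], of t "\<bar>a $ i\<bar>" "\<bar>b $ i\<bar>"] st
        by (simp add: eq_diff_eq[symmetric] add.commute)
      finally show "\<bar>(s *\<^sub>R a + t *\<^sub>R b) $ i\<bar> powr p \<le> s * \<bar>a $ i\<bar> powr p + t * \<bar>b $ i\<bar> powr p" .
    qed
    also have "\<dots> = s * (\<Sum>i\<in>UNIV. \<bar>a $ i\<bar> powr p) + t * (\<Sum>i\<in>UNIV. \<bar>b $ i\<bar> powr p)"
      by (simp add: sum.distrib sum_distrib_left)
    also have "\<dots> \<le> s * R powr p + t * R powr p"
      using a b st ball_iff by (intro add_mono mult_left_mono) auto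
    also have "\<dots> = R powr p"
      using st by (simp add: distrib_right[symmetric])
    finally show "s *\<^sub>R a + t *\<^sub>R b \<in> {w. lp_norm p w \<le> R}"
      using ball_iff by simp
  qed
qed

section \<open>Convex functions on the real line\<close>

lemma convex_on_slope_mono:
  fixes f :: "real \<Rightarrow> real"
  assumes f: "convex_on UNIV f" and "a < b" "c < d" "a \<le> c" "b \<le> d"
  shows "(f b - f a) / (b - a) \<le> (f d - f c) / (d - c)"
proof -
  have swap: "(u - v) / (s - t) = (v - u) / (t - s)" for u v s t :: real
    by (metis minus_diff_eq minus_divide_divide)
  have "(f b - f a) / (b - a) \<le> (f d - f a) / (d - a)"
  proof (cases "b = d")
    case False
    with convex_on_slope_le(1)[OF f _ _ \<open>a < b\<close>, of d] assms show ?thesis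
      by (simp add: swap)
  qed simp
  also have "\<dots> \<le> (f d - f c) / (d - c)"
  proof (cases "a = c")
    case False
    with convex_on_slope_le(2)[OF f _ _ _ \<open>c < d\<close>, of a] assms show ?thesis
      by (simp add: swap)
  qed simp
  finally show ?thesis .
qed

lemma convex_on_drop_rate_mono:
  fixes f :: "real \<Rightarrow> real"
  assumes f: "convex_on UNIV f" and "a < b" "b \<le> c" "c < d"
  shows "(f c - f d) * (b - a) \<le> (f a - f b) * (d - c)"
proof -
  have "(f b - f a) / (b - a) \<le> (f d - f c) / (d - c)"
    using convex_on_slope_mono[OF f, of a b c d] assms by simp
  then have "(f b - f a) * (d - c) \<le> (f d - f c) * (b - a)"
    using assms by (simp add: divide_simps)
  then show ?thesis
    by (simp add: algebra_simps)
qed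

lemma convex_on_drop_shift_mono:
  fixes f :: "real \<Rightarrow> real"
  assumes f: "convex_on UNIV f" and "0 \<le> h" "x \<le> x'"
  shows "f x' - f (x' + h) \<le> f x - f (x + h)"
proof (cases "h = 0")
  case False
  then have "h > 0"
    using assms by simp
  with convex_on_slope_mono[OF f, of x "x + h" x' "x' + h"] assms show ?thesis
    by (simp add: divide_simps)
qed simp

lemma convex_antimono_strict:
  fixes f :: "real \<Rightarrow> real"
  assumes f: "convex_on UNIV f" "antimono f" and no_min: "\<forall>t. \<exists>s. f s < f t" and "a < b"
  shows "f b < f a"
proof (rule ccontr)
  assume "\<not> f b < f a"
  with \<open>a < b\<close> antimonoD[OF f(2)] have eq: "f b = f a"
    by (meson less_imp_le order_antisym_conv not_le)
  have "f b \<le> f t" for t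
  proof (cases "t \<le> b")
    case True
    then show ?thesis
      using antimonoD[OF f(2)] by blast
  next
    case False
    with convex_on_slope_mono[OF f(1), of a b b t] \<open>a < b\<close> eq show ?thesis
      by (simp add: divide_simps)
  qed
  with no_min show False
    by (meson not_less)
qed

lemma antimono_convex_mix_increase_le:
  fixes f :: "real \<Rightarrow> real"
  assumes f: "convex_on UNIV f" "antimono f"
    and \<delta>: "0 < \<delta>" "\<delta> \<le> 1/2" and g: "0 < g" "g \<le> v" and M: "0 \<le> M" "g < a \<longrightarrow> a \<le> M"
  shows "f ((1 - \<delta>) * a + \<delta> * v) - f a \<le> f (g / 2) - f (g / 2 + \<delta> * M)"
proof (cases "a \<le> v")
  case True
  then have "a \<le> (1 - \<delta>) * a + \<delta> * v"
    using \<delta> by (simp add: algebra_simps mult_left_mono)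
  then have "f ((1 - \<delta>) * a + \<delta> * v) \<le> f a"
    using antimonoD[OF f(2)] by blast
  moreover have "f (g / 2 + \<delta> * M) \<le> f (g / 2)"
    using antimonoD[OF f(2)] \<delta> M by simp
  ultimately show ?thesis
    by simp
next
  case False
  then have a: "g < a" "a \<le> M"
    using g M by auto
  have "f ((1 - \<delta>) * a + \<delta> * v) - f a \<le> f ((1 - \<delta>) * a) - f ((1 - \<delta>) * a + \<delta> * a)"
    using antimonoD[OF f(2), of "(1 - \<delta>) * a" "(1 - \<delta>) * a + \<delta> * v"] \<delta> g
    by (simp add: algebra_simps)
  also have "\<dots> \<le> f (g / 2) - f (g / 2 + \<delta> * a)"
  proof (rule convex_on_drop_shift_mono[OF f(1)])
    show "0 \<le> \<delta> * a"
      using \<delta> a g by simp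
    have "\<delta> * g \<le> 1/2 * g"
      using \<delta> g by (intro mult_right_mono) auto
    then have "g / 2 \<le> (1 - \<delta>) * g"
      by (simp add: algebra_simps)
    also have "\<dots> \<le> (1 - \<delta>) * a"
      using \<delta> a by (intro mult_left_mono) auto
    finally show "g / 2 \<le> (1 - \<delta>) * a" .
  qed
  also have "\<dots> \<le> f (g / 2) - f (g / 2 + \<delta> * M)"
    using antimonoD[OF f(2)] \<delta> a by (simp add: mult_left_mono)
  finally show ?thesis .
qed

lemma sum_le_sum_gain:
  fixes f g :: "nat \<Rightarrow> real"
  assumes le: "\<And>i. i < n \<Longrightarrow> f i \<le> g i + H" and "0 \<le> H"
    and j: "j < n" "f j \<le> g j - G"
  shows "(\<Sum>i<n. f i) \<le> (\<Sum>i<n. g i) - G + n * H"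
proof -
  have "(\<Sum>i<n. f i) = f j + (\<Sum>i\<in>{..<n} - {j}. f i)"
    using j by (simp add: sum.remove)
  also have "\<dots> \<le> (g j - G) + (\<Sum>i\<in>{..<n} - {j}. g i + H)"
    using j le by (intro add_mono sum_mono) auto
  also have "\<dots> = (\<Sum>i<n. g i) - G + (n - 1) * H"
    using j by (simp add: sum.distrib sum.remove of_nat_diff)
  also have "\<dots> \<le> (\<Sum>i<n. g i) - G + n * H"
    using \<open>0 \<le> H\<close> by (simp add: mult_right_mono)
  finally show ?thesis .
qed

section \<open>Ratio drops\<close>

lemma filterlim_mult_const_at_top: "c > 0 \<Longrightarrow> filterlim (\<lambda>x::real. c * x) at_top at_top"
  by (intro filterlim_tendsto_pos_mult_at_top[OF tendsto_const _ filterlim_ident])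

definition ratio_drop :: "(real \<Rightarrow> real) \<Rightarrow> real \<Rightarrow> real \<Rightarrow> real" where
  "ratio_drop f r s = f (s / r) - f s"

lemma ratio_drop_nonneg:
  assumes "antimono f" "r \<ge> 1" "s \<ge> 0"
  shows "0 \<le> ratio_drop f r s"
proof -
  have "s / r \<le> s"
    using assms mult_right_mono[of 1 r s] by (simp add: divide_le_eq mult.commute)
  then show ?thesis
    unfolding ratio_drop_def using antimonoD[OF assms(1)] by simp
qed

text \<open>The constant \<open>4/3\<close> is the geometric series \<open>1 + 1/4 + 1/16 + \<dots>\<close>.\<close>
lemma drop_le_ratio_drop_upto:
  fixes f :: "real \<Rightarrow> real"
  assumes f: "antimono f" and r: "r > 1" and x0: "x0 > 0"
    and contract: "\<And>t. t \<ge> x0 \<Longrightarrow> ratio_drop f r (t / r) \<le> ratio_drop f r t / 4"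
    and x: "x0 \<le> x" "x \<le> x0 * r ^ Suc k"
  shows "f 0 - f x \<le> 4/3 * ratio_drop f r x + (f 0 - f (x0 * r))"
  using x
proof (induction k arbitrary: x)
  case 0
  then have "f (x0 * r) \<le> f x"
    using antimonoD[OF f] by simp
  moreover have "0 \<le> ratio_drop f r x"
    using ratio_drop_nonneg[OF f] r x0 0 by simp
  ultimately show ?case
    by simp
next
  case (Suc k)
  show ?case
  proof (cases "x \<le> x0 * r ^ Suc k")
    case True
    with Suc show ?thesis
      by blast
  next
    case False
    have "x0 * r \<le> x0 * r ^ Suc k"
      using mult_left_mono[of 1 "r ^ k" "x0 * r"] x0 r by (simp add: one_le_power mult_ac)
    with False have "x0 * r \<le> x"
      by linarith
    then have "x0 \<le> x / r" "x / r \<le> x0 * r ^ Suc k"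
      using Suc.prems r by (simp_all add: field_simps)
    then have "f 0 - f (x / r) \<le> 4/3 * ratio_drop f r (x / r) + (f 0 - f (x0 * r))"
      by (rule Suc.IH)
    moreover have "ratio_drop f r (x / r) \<le> ratio_drop f r x / 4"
      using contract Suc.prems by simp
    moreover have "f 0 - f x = ratio_drop f r x + (f 0 - f (x / r))"
      by (simp add: ratio_drop_def)
    ultimately show ?thesis
      by simp
  qed
qed

lemma drop_le_ratio_drop:
  fixes f :: "real \<Rightarrow> real"
  assumes f: "antimono f" and r: "r > 1" and x0: "x0 > 0"
    and contract: "\<And>t. t \<ge> x0 \<Longrightarrow> ratio_drop f r (t / r) \<le> ratio_drop f r t / 4"
    and x: "x \<ge> x0"
  shows "f 0 - f x \<le> 4/3 * ratio_drop f r x + (f 0 - f (x0 * r))"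
proof -
  obtain k where "x / x0 < r ^ k"
    using real_arch_pow[OF r] by blast
  then have "x \<le> x0 * r ^ k * 1"
    using x0 by (simp add: field_simps)
  also have "\<dots> \<le> x0 * r ^ k * r"
    using x0 r by (intro mult_left_mono) simp_all
  finally show ?thesis
    using drop_le_ratio_drop_upto[OF f r x0 contract x, of k] by (simp add: mult_ac)
qed

lemma ratio_drop_at_top:
  fixes f :: "real \<Rightarrow> real"
  assumes f: "antimono f" and strict: "\<And>a b. a < b \<Longrightarrow> f b < f a" and r: "r > 1" and x0: "x0 > 0"
    and contract: "\<And>t. t \<ge> x0 \<Longrightarrow> ratio_drop f r (t / r) \<le> ratio_drop f r t / 4"
  shows "filterlim (ratio_drop f r) at_top at_top"
proof -
  have x0_le: "x0 \<le> x0 * r ^ k" for k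
    using x0 r by (simp add: one_le_power)
  have pos: "ratio_drop f r x0 > 0"
    unfolding ratio_drop_def using strict[of "x0 / r" x0] x0 r by (simp add: divide_less_eq)
  have grow: "4 ^ k * ratio_drop f r x0 \<le> ratio_drop f r (x0 * r ^ k)" for k
  proof (induction k)
    case (Suc k)
    have "x0 \<le> x0 * r ^ Suc k"
      by (rule x0_le)
    then have "ratio_drop f r (x0 * r ^ k) \<le> ratio_drop f r (x0 * r ^ Suc k) / 4"
      using contract[of "x0 * r ^ Suc k"] r by simp
    with Suc show ?case
      by simp
  qed simp
  show ?thesis
    unfolding filterlim_at_top
  proof
    fix Z :: real
    obtain k where k: "(4/3 * \<bar>Z\<bar> + (f 0 - f (x0 * r))) / ratio_drop f r x0 < 4 ^ k"
      using real_arch_pow[of 4] by fastforce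
    note x0_le[of k]
    moreover have "Z \<le> ratio_drop f r s" if s: "x0 * r ^ k \<le> s" for s
    proof -
      have "4 ^ k * ratio_drop f r x0 \<le> f 0 - f (x0 * r ^ k)"
        using grow[of k] x0 r antimonoD[OF f, of 0 "x0 * r ^ k / r"]
        by (simp add: ratio_drop_def)
      also have "\<dots> \<le> f 0 - f s"
        using antimonoD[OF f s] by simp
      also have "\<dots> \<le> 4/3 * ratio_drop f r s + (f 0 - f (x0 * r))"
        using drop_le_ratio_drop[OF f r x0 contract] s \<open>x0 \<le> x0 * r ^ k\<close> by simp
      finally show ?thesis
        using k pos by (simp add: divide_less_eq)
    qed
    ultimately show "\<forall>\<^sub>F s in at_top. Z \<le> ratio_drop f r s"
      unfolding eventually_at_top_linorder by blast
  qed
qed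

lemma ratio_drop_contraction:
  fixes f :: "real \<Rightarrow> real"
  assumes f: "antimono f" and r: "r > 1" "4 * K \<le> r"
    and scaling: "\<forall>\<^sub>F t in at_top. ratio_drop f r (1 / r * t) \<le> K * (1 / r) * ratio_drop f r t"
  obtains x0 where "x0 > 0" "\<And>t. t \<ge> x0 \<Longrightarrow> ratio_drop f r (t / r) \<le> ratio_drop f r t / 4"
proof -
  obtain t0 where t0: "\<And>t. t \<ge> t0 \<Longrightarrow> ratio_drop f r (1 / r * t) \<le> K * (1 / r) * ratio_drop f r t"
    using scaling by (auto simp: eventually_at_top_linorder)
  have "ratio_drop f r (t / r) \<le> ratio_drop f r t / 4" if "t \<ge> max t0 1" for t
  proof -
    have "ratio_drop f r (t / r) \<le> K / r * ratio_drop f r t"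
      using t0[of t] that by simp
    also have "\<dots> \<le> 1/4 * ratio_drop f r t"
      using r ratio_drop_nonneg[OF f, of r t] that by (intro mult_right_mono) (auto simp: field_simps)
    finally show ?thesis
      by simp
  qed
  then show ?thesis
    using that[of "max t0 1"] by simp
qed

lemma ratio_drop_le_drop:
  fixes f :: "real \<Rightarrow> real"
  assumes f: "convex_on UNIV f" and r: "r > 1" and c: "0 < c1" "c1 < c2" and B: "B > 0"
  shows "(c2 - c1) / (c2 * (r - 1)) * ratio_drop f r (r * c2 * B) \<le> f (c1 * B) - f (c2 * B)"
proof -
  have "(f (c2 * B) - f (r * c2 * B)) * (c2 * B - c1 * B) \<le> (f (c1 * B) - f (c2 * B)) * (r * c2 * B - c2 * B)"
    using c B r by (intro convex_on_drop_rate_mono[OF f]) auto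
  then have "ratio_drop f r (r * c2 * B) * (c2 - c1) * B \<le> (f (c1 * B) - f (c2 * B)) * ((r - 1) * c2) * B"
    using r by (simp add: ratio_drop_def algebra_simps)
  then have "ratio_drop f r (r * c2 * B) * (c2 - c1) \<le> (f (c1 * B) - f (c2 * B)) * ((r - 1) * c2)"
    using B by simp
  then show ?thesis
    using r c by (simp add: field_simps)
qed

lemma drop_negligible_wrt_ratio_drop:
  fixes f :: "real \<Rightarrow> real"
  assumes f: "antimono f" and strict: "\<And>a b. a < b \<Longrightarrow> f b < f a"
    and r: "r > 1" "4 * K \<le> r" and K: "K > 0" and \<epsilon>: "\<epsilon> > 0"
    and scaling: "\<And>\<rho>. 0 < \<rho> \<Longrightarrow> \<rho> \<le> 1 \<Longrightarrow>
        \<forall>\<^sub>F t in at_top. ratio_drop f r (\<rho> * t) \<le> K * \<rho> * ratio_drop f r t"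
  shows "\<exists>\<rho>>0. \<forall>\<^sub>F s in at_top. f 0 - f (\<rho> * s) \<le> \<epsilon> * ratio_drop f r s"
proof -
  obtain x0 where x0: "x0 > 0"
    and contract: "\<And>t. t \<ge> x0 \<Longrightarrow> ratio_drop f r (t / r) \<le> ratio_drop f r t / 4"
    using ratio_drop_contraction[OF f r scaling[of "1 / r"]] r by auto
  define C where "C = f 0 - f (x0 * r)"
  define \<rho> where "\<rho> = min 1 (3 * \<epsilon> / (8 * K))"
  have \<rho>: "0 < \<rho>" "\<rho> \<le> 1" "4/3 * (K * \<rho>) \<le> \<epsilon> / 2"
    using K \<epsilon> by (auto simp: \<rho>_def min_def field_simps)
  have "\<forall>\<^sub>F s in at_top. 2 * C / \<epsilon> \<le> ratio_drop f r s"
    using ratio_drop_at_top[OF f strict r(1) x0 contract] unfolding filterlim_at_top by blast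
  with scaling[OF \<rho>(1,2)] eventually_ge_at_top[of "x0 / \<rho>"]
  have "\<forall>\<^sub>F s in at_top. f 0 - f (\<rho> * s) \<le> \<epsilon> * ratio_drop f r s"
  proof eventually_elim
    case (elim s)
    have "x0 \<le> \<rho> * s"
      using elim(2) \<rho> by (simp add: field_simps)
    then have "0 < \<rho> * s"
      using x0 by linarith
    then have "0 < s"
      using \<rho> by (simp add: zero_less_mult_iff)
    then have "0 \<le> ratio_drop f r s"
      using ratio_drop_nonneg[OF f] r by simp
    have "f 0 - f (\<rho> * s) \<le> 4/3 * ratio_drop f r (\<rho> * s) + C"
      using drop_le_ratio_drop[OF f r(1) x0 contract \<open>x0 \<le> \<rho> * s\<close>] by (simp add: C_def)
    also have "\<dots> \<le> 4/3 * (K * \<rho>) * ratio_drop f r s + C"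
      using elim(1) by simp
    also have "\<dots> \<le> \<epsilon> / 2 * ratio_drop f r s + \<epsilon> / 2 * ratio_drop f r s"
      using mult_right_mono[OF \<rho>(3) \<open>0 \<le> ratio_drop f r s\<close>] elim(3) \<epsilon>
      by (simp add: field_simps)
    finally show ?case
      by simp
  qed
  with \<rho> show ?thesis
    by blast
qed

text \<open>The analytic core of the case where a margin of the limit direction vanishes.\<close>
lemma scaling_ratio_drop_dominates:
  fixes f :: "real \<Rightarrow> real" and K N c1 c2 :: real
  assumes f: "convex_on UNIV f" "antimono f" and strict: "\<And>a b. a < b \<Longrightarrow> f b < f a"
    and K: "K > 0" and N: "N > 0" and c: "0 < c1" "c1 < c2"
    and scaling: "\<And>r \<rho>. r > 1 \<Longrightarrow> 0 < \<rho> \<Longrightarrow> \<rho> \<le> 1 \<Longrightarrow>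
        \<forall>\<^sub>F t in at_top. ratio_drop f r (\<rho> * t) \<le> K * \<rho> * ratio_drop f r t"
  shows "\<exists>\<eta>>0. \<forall>\<^sub>F B in at_top. N * (f 0 - f (\<eta> * B)) \<le> f (c1 * B) - f (c2 * B)"
proof -
  define r where "r = max 2 (4 * K)"
  have r: "r > 1" "4 * K \<le> r"
    by (auto simp: r_def)
  define \<beta> where "\<beta> = (c2 - c1) / (c2 * (r - 1))"
  have "\<beta> / N > 0"
    using c r N by (simp add: \<beta>_def)
  from drop_negligible_wrt_ratio_drop[OF f(2) strict r K this scaling[OF r(1)]]
  obtain \<rho> where \<rho>: "\<rho> > 0" and negligible: "\<forall>\<^sub>F s in at_top. f 0 - f (\<rho> * s) \<le> \<beta> / N * ratio_drop f r s"
    by blast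
  have "\<forall>\<^sub>F B in at_top. f 0 - f (\<rho> * (r * c2 * B)) \<le> \<beta> / N * ratio_drop f r (r * c2 * B)"
    using eventually_compose_filterlim[OF negligible filterlim_mult_const_at_top[of "r * c2"]] r c by simp
  with eventually_gt_at_top[of 0]
  have "\<forall>\<^sub>F B in at_top. N * (f 0 - f (\<rho> * r * c2 * B)) \<le> f (c1 * B) - f (c2 * B)"
  proof eventually_elim
    case (elim B)
    then have "N * (f 0 - f (\<rho> * r * c2 * B)) \<le> \<beta> * ratio_drop f r (r * c2 * B)"
      using N by (simp add: field_simps mult.assoc)
    also have "\<dots> \<le> f (c1 * B) - f (c2 * B)"
      unfolding \<beta>_def using ratio_drop_le_drop[OF f(1) r(1) c elim(1)] .
    finally show ?case .
  qed
  moreover have "\<rho> * r * c2 > 0"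
    using \<rho> r c by simp
  ultimately show ?thesis
    by blast
qed

section \<open>The regularization path\<close>

lemma emp_loss_convex:
  fixes l :: "real \<Rightarrow> real" and x :: "nat \<Rightarrow> real ^ 'd"
  assumes l: "convex_on UNIV l"
  shows "convex_on UNIV (emp_loss l n x y)"
proof -
  have "convex_on UNIV (\<lambda>w :: real ^ 'd. l (y i * (w \<bullet> x i)))" for i
  proof (rule convex_onI)
    fix t :: real and a b :: "real ^ 'd"
    assume "0 < t" "t < 1"
    then show "l (y i * (((1 - t) *\<^sub>R a + t *\<^sub>R b) \<bullet> x i))
        \<le> (1 - t) * l (y i * (a \<bullet> x i)) + t * l (y i * (b \<bullet> x i))"
      using convex_onD[OF l, of t "y i * (a \<bullet> x i)" "y i * (b \<bullet> x i)"]
      by (simp add: inner_add_left algebra_simps)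
  qed simp
  then have "convex_on UNIV (\<lambda>w :: real ^ 'd. \<Sum>i<k. l (y i * (w \<bullet> x i)))" for k
    by (induction k) (simp_all add: convex_on_const convex_on_add)
  then show ?thesis
    unfolding emp_loss_def by (intro convex_on_cmul) auto
qed

definition linearly_decreasing :: "(real \<Rightarrow> real) \<Rightarrow> bool" where
  "linearly_decreasing f \<longleftrightarrow> (\<exists>c>0. \<forall>\<^sub>F t in at_top. c * t \<le> f 0 - f t)"

locale reg_path_setting =
  fixes p :: real and n :: nat and x :: "nat \<Rightarrow> real ^ 'd" and y :: "nat \<Rightarrow> real"
    and l :: "real \<Rightarrow> real" and wbar :: "real \<Rightarrow> real ^ 'd" and wreg :: "real ^ 'd"
  assumes p_gt_1: "p > 1" and n_pos: "n > 0"
    and l_convex: "convex_on UNIV l" and l_antimono: "antimono l" and l_no_min: "\<forall>t. \<exists>s. l s < l t"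
    and path: "is_reg_path p (emp_loss l n x y) wbar"
    and dir: "((\<lambda>B. (1 / B) *\<^sub>R wbar B) \<longlongrightarrow> wreg) at_top"
begin

abbreviation L :: "real ^ 'd \<Rightarrow> real" where
  "L \<equiv> emp_loss l n x y"

definition margin :: "real ^ 'd \<Rightarrow> nat \<Rightarrow> real" where
  "margin w i = y i * (w \<bullet> x i)"

definition path_margin :: "real \<Rightarrow> nat \<Rightarrow> real" where
  "path_margin B i = margin ((1 / B) *\<^sub>R wbar B) i"

definition path_slope :: "real \<Rightarrow> real" where
  "path_slope B = (L (wbar B) - l 0) / B"

lemma margin_scaleR: "margin (c *\<^sub>R w) i = c * margin w i"
  by (simp add: margin_def)

lemma margin_add: "margin (v + w) i = margin v i + margin w i"
  by (simp add: margin_def inner_add_left algebra_simps)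

lemma margin_path: "B > 0 \<Longrightarrow> margin (wbar B) i = B * path_margin B i"
  by (simp add: path_margin_def margin_scaleR)

lemma loss_eq: "L w = (\<Sum>i<n. l (margin w i)) / n"
  by (simp add: emp_loss_def margin_def)

lemma loss_le_iff: "L v \<le> L w \<longleftrightarrow> (\<Sum>i<n. l (margin v i)) \<le> (\<Sum>i<n. l (margin w i))"
  using n_pos by (simp add: loss_eq divide_le_cancel)

lemma loss_zero: "L 0 = l 0"
  using n_pos by (simp add: loss_eq margin_def)

lemma l_strict: "a < b \<Longrightarrow> l b < l a"
  using convex_antimono_strict[OF l_convex l_antimono l_no_min] .

lemma l_mono: "a \<le> b \<Longrightarrow> l b \<le> l a"
  using antimonoD[OF l_antimono] .

lemma path_norm_le: "B > 0 \<Longrightarrow> lp_norm p (wbar B) \<le> B"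
  using path unfolding is_reg_path_def by blast

lemma path_optimal: "B > 0 \<Longrightarrow> lp_norm p w \<le> B \<Longrightarrow> L (wbar B) \<le> L w"
  using path unfolding is_reg_path_def by blast

lemma path_margin_tendsto: "((\<lambda>B. path_margin B i) \<longlongrightarrow> margin wreg i) at_top"
  unfolding path_margin_def margin_def by (intro tendsto_intros dir)

lemma eventually_path_margin_le: "\<exists>M>0. \<forall>\<^sub>F B in at_top. \<forall>i<n. path_margin B i \<le> M"
proof -
  define M where "M = 1 + (\<Sum>i<n. \<bar>margin wreg i\<bar>)"
  have "margin wreg i < M" if "i < n" for i
    using member_le_sum[of i "{..<n}" "\<lambda>i. \<bar>margin wreg i\<bar>"] that by (simp add: M_def)
  then have "\<forall>\<^sub>F B in at_top. \<forall>i\<in>{..<n}. path_margin B i < M"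
    by (intro eventually_ball_finite ballI order_tendstoD(2)[OF path_margin_tendsto]) auto
  then have "\<forall>\<^sub>F B in at_top. \<forall>i<n. path_margin B i \<le> M"
    by (rule eventually_mono) (auto intro: less_imp_le)
  moreover have "M > 0"
    by (simp add: M_def add_pos_nonneg sum_nonneg)
  ultimately show ?thesis
    by blast
qed

lemma separator:
  assumes "lin_separable n x y"
  obtains u \<gamma> where "lp_norm p u \<le> 1" "\<gamma> > 0" "\<And>i. i < n \<Longrightarrow> \<gamma> \<le> margin u i"
proof -
  obtain w0 where w0: "\<forall>i<n. margin w0 i > 0"
    using assms unfolding lin_separable_def margin_def by blast
  define u where "u = (1 / (lp_norm p w0 + 1)) *\<^sub>R w0"
  have "lp_norm p u = lp_norm p w0 / (lp_norm p w0 + 1)"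
    unfolding u_def using p_gt_1 lp_norm_nonneg[of p w0] by (subst lp_norm_scaleR) auto
  then have "lp_norm p u \<le> 1"
    using lp_norm_nonneg[of p w0] by simp
  moreover define \<gamma> where "\<gamma> = Min ((\<lambda>i. margin u i) ` {..<n})"
  have "\<forall>i<n. margin u i > 0"
    using w0 lp_norm_nonneg[of p w0] by (simp add: u_def margin_scaleR add_pos_nonneg)
  moreover have "\<gamma> \<in> (\<lambda>i. margin u i) ` {..<n}"
    unfolding \<gamma>_def using n_pos by (intro Min_in) auto
  ultimately show ?thesis
    using that[of u \<gamma>] by (auto simp: \<gamma>_def)
qed

lemma eventually_dir_le_path_imp:
  assumes "\<forall>\<^sub>F B in at_top. L ((c * B) *\<^sub>R wreg) \<le> L (wbar B)"
  shows "\<exists>r. \<forall>w. lp_norm p w > r \<longrightarrow> L ((c * lp_norm p w) *\<^sub>R wreg) \<le> L w"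
proof -
  obtain r where r: "\<And>B. B \<ge> r \<Longrightarrow> L ((c * B) *\<^sub>R wreg) \<le> L (wbar B)"
    using assms unfolding eventually_at_top_linorder by blast
  show ?thesis
  proof (intro exI[of _ "max r 0"] allI impI)
    fix w :: "real ^ 'd" assume "lp_norm p w > max r 0"
    then show "L ((c * lp_norm p w) *\<^sub>R wreg) \<le> L w"
      using r[of "lp_norm p w"] path_optimal[of "lp_norm p w" w] by simp
  qed
qed

lemma eventually_dir_le_path_pos:
  assumes pos: "\<And>i. i < n \<Longrightarrow> margin wreg i > 0" and \<alpha>: "\<alpha> > 0"
  shows "\<forall>\<^sub>F B in at_top. L (((1 + \<alpha>) * B) *\<^sub>R wreg) \<le> L (wbar B)"
proof -
  have "\<forall>\<^sub>F B in at_top. \<forall>i\<in>{..<n}. path_margin B i < (1 + \<alpha>) * margin wreg i"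
    using pos \<alpha> by (intro eventually_ball_finite ballI order_tendstoD(2)[OF path_margin_tendsto]) auto
  with eventually_gt_at_top[of 0] show ?thesis
  proof eventually_elim
    case (elim B)
    have "l (margin (((1 + \<alpha>) * B) *\<^sub>R wreg) i) \<le> l (margin (wbar B) i)" if "i < n" for i
    proof (rule l_mono)
      have "B * path_margin B i \<le> B * ((1 + \<alpha>) * margin wreg i)"
        using elim that by (intro mult_left_mono) (auto intro: less_imp_le)
      then show "margin (wbar B) i \<le> margin (((1 + \<alpha>) * B) *\<^sub>R wreg) i"
        using elim by (simp add: margin_path margin_scaleR)
    qed
    then show ?case
      unfolding loss_le_iff by (intro sum_mono) auto
  qed
qed

lemma dir_loss_le_path_loss:
  assumes B: "B > 0" and \<eta>: "\<eta> > 0"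
    and zero: "\<And>i. i < n \<Longrightarrow> margin wreg i = 0 \<Longrightarrow> path_margin B i \<le> \<eta>"
    and nonzero: "\<And>i. i < n \<Longrightarrow> margin wreg i \<noteq> 0 \<Longrightarrow> path_margin B i \<le> c * margin wreg i"
    and i0: "i0 < n" "path_margin B i0 \<le> c1"
    and gain: "n * (l 0 - l (\<eta> * B)) \<le> l (c1 * B) - l (c * margin wreg i0 * B)"
  shows "L ((c * B) *\<^sub>R wreg) \<le> L (wbar B)"
proof -
  let ?H = "l 0 - l (\<eta> * B)" and ?G = "l (c1 * B) - l (c * margin wreg i0 * B)"
  have "(\<Sum>i<n. l (margin ((c * B) *\<^sub>R wreg) i)) \<le> (\<Sum>i<n. l (margin (wbar B) i)) - ?G + n * ?H"
  proof (rule sum_le_sum_gain)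
    show H: "0 \<le> ?H"
      using B \<eta> l_mono by simp
    fix i assume i: "i < n"
    show "l (margin ((c * B) *\<^sub>R wreg) i) \<le> l (margin (wbar B) i) + ?H"
    proof (cases "margin wreg i = 0")
      case True
      then have "margin (wbar B) i \<le> \<eta> * B"
        using zero[OF i] B by (simp add: margin_path mult.commute)
      then show ?thesis
        using True l_mono by (simp add: margin_scaleR)
    next
      case False
      then have "margin (wbar B) i \<le> margin ((c * B) *\<^sub>R wreg) i"
        using mult_left_mono[OF nonzero[OF i False], of B] B
        by (simp add: margin_path margin_scaleR mult_ac)
      with H show ?thesis
        using l_mono by force
    qed
  next
    have "margin (wbar B) i0 \<le> c1 * B"
      using i0 B by (simp add: margin_path mult.commute)
    then show "l (margin ((c * B) *\<^sub>R wreg) i0) \<le> l (margin (wbar B) i0) - ?G"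
      using l_mono by (simp add: margin_scaleR mult_ac)
  qed (rule i0(1))
  with gain show ?thesis
    unfolding loss_le_iff by linarith
qed

lemma loss_scaleR_le: "0 \<le> \<theta> \<Longrightarrow> \<theta> \<le> 1 \<Longrightarrow> L (\<theta> *\<^sub>R w) \<le> l 0 + \<theta> * (L w - l 0)"
  using convex_onD[OF emp_loss_convex[OF l_convex, of n x y], of \<theta> 0 w] loss_zero
  by (simp add: algebra_simps)

lemma path_loss_eq: "B > 0 \<Longrightarrow> L (wbar B) = l 0 + B * path_slope B"
  by (simp add: path_slope_def)

lemma path_slope_nonpos:
  assumes "B > 0"
  shows "path_slope B \<le> 0"
proof -
  have "L (wbar B) \<le> L 0"
    using path_optimal[of B 0] assms by simp
  then show ?thesis
    using assms by (simp add: path_slope_def loss_zero divide_nonpos_pos)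
qed

lemma bdd_above_path_slope: "bdd_above (path_slope ` {0<..})"
  using path_slope_nonpos by (intro bdd_aboveI[of _ 0]) auto

lemma path_slope_mono:
  assumes B: "0 < B1" "B1 \<le> B2"
  shows "path_slope B1 \<le> path_slope B2"
proof -
  have "lp_norm p ((B1 / B2) *\<^sub>R wbar B2) = B1 / B2 * lp_norm p (wbar B2)"
    using p_gt_1 B by (intro lp_norm_scaleR) auto
  also have "\<dots> \<le> B1 / B2 * B2"
    using path_norm_le[of B2] B by (intro mult_left_mono) auto
  finally have "L (wbar B1) \<le> L ((B1 / B2) *\<^sub>R wbar B2)"
    using path_optimal B by simp
  also have "\<dots> \<le> l 0 + B1 / B2 * (L (wbar B2) - l 0)"
    using B by (intro loss_scaleR_le) auto
  finally have "L (wbar B1) - l 0 \<le> path_slope B2 * B1"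
    using B by (simp add: path_slope_def field_simps)
  then show ?thesis
    using B by (simp add: path_slope_def pos_divide_le_eq)
qed

text \<open>Convexity along the segment from \<open>0\<close> to \<open>wbar B\<close> bounds \<open>L\<close> at \<open>(T / B) wbar B\<close>, and
  these points tend to \<open>T wreg\<close>.\<close>
lemma dir_loss_le_Sup_slope:
  assumes T: "T > 0"
  shows "L (T *\<^sub>R wreg) \<le> l 0 + T * Sup (path_slope ` {0<..})"
proof (rule tendsto_upperbound)
  have "isCont L (T *\<^sub>R wreg)"
    using convex_on_continuous[OF open_UNIV emp_loss_convex[OF l_convex, of n x y]]
    by (simp add: continuous_on_eq_continuous_at)
  then show "((\<lambda>B. L (T *\<^sub>R ((1 / B) *\<^sub>R wbar B))) \<longlongrightarrow> L (T *\<^sub>R wreg)) at_top"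
    by (intro isCont_tendsto_compose[of _ L] tendsto_intros dir)
  show "\<forall>\<^sub>F B in at_top. L (T *\<^sub>R ((1 / B) *\<^sub>R wbar B)) \<le> l 0 + T * Sup (path_slope ` {0<..})"
    using eventually_ge_at_top[of T]
  proof eventually_elim
    case (elim B)
    then have B: "B > 0"
      using T by simp
    have "L (T *\<^sub>R ((1 / B) *\<^sub>R wbar B)) = L ((T / B) *\<^sub>R wbar B)"
      by simp
    also have "\<dots> \<le> l 0 + T / B * (L (wbar B) - l 0)"
      using T elim by (intro loss_scaleR_le) auto
    also have "\<dots> = l 0 + T * path_slope B"
      by (simp add: path_slope_def)
    also have "\<dots> \<le> l 0 + T * Sup (path_slope ` {0<..})"
      using T B by (intro add_left_mono mult_left_mono cSup_upper bdd_above_path_slope) auto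
    finally show ?case .
  qed
qed simp

end

locale separated_reg_path = reg_path_setting +
  fixes u and \<gamma> :: real
  assumes u_norm: "lp_norm p u \<le> 1" and \<gamma>_pos: "\<gamma> > 0"
    and u_margin: "\<And>i. i < n \<Longrightarrow> \<gamma> \<le> margin u i"
begin

lemma Sup_path_slope_neg:
  assumes "linearly_decreasing l"
  shows "Sup (path_slope ` {0<..}) < 0"
proof -
  obtain c t0 where c: "c > 0" and t0: "\<And>t. t \<ge> t0 \<Longrightarrow> c * t \<le> l 0 - l t"
    using assms unfolding linearly_decreasing_def eventually_at_top_linorder by blast
  define B0 where "B0 = max (t0 / \<gamma>) 1"
  have slope_le: "path_slope B \<le> - (c * \<gamma>)" if B: "B \<ge> B0" for B
  proof -
    have B: "B > 0" "t0 \<le> B * \<gamma>"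
      using B \<gamma>_pos by (auto simp: B0_def field_simps)
    have "lp_norm p (B *\<^sub>R u) \<le> B"
      using lp_norm_scaleR[of p B u] p_gt_1 B u_norm by (simp add: mult_left_le)
    then have "L (wbar B) \<le> L (B *\<^sub>R u)"
      using path_optimal B by blast
    also have "\<dots> \<le> (\<Sum>i<n. l (B * \<gamma>)) / n"
      unfolding loss_eq using B u_margin n_pos
      by (intro divide_right_mono sum_mono l_mono) (auto simp: margin_scaleR)
    also have "\<dots> = l (B * \<gamma>)"
      using n_pos by simp
    also have "\<dots> \<le> l 0 - c * (B * \<gamma>)"
      using t0[of "B * \<gamma>"] B by simp
    finally show ?thesis
      using B by (simp add: path_slope_def pos_divide_le_eq algebra_simps)
  qed
  have "Sup (path_slope ` {0<..}) \<le> - (c * \<gamma>)"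
  proof (rule cSup_least)
    fix k assume "k \<in> path_slope ` {0<..}"
    then obtain B where "B > 0" "k = path_slope B"
      by auto
    then show "k \<le> - (c * \<gamma>)"
      using path_slope_mono[of B "max B B0"] slope_le[of "max B B0"] by simp
  qed auto
  moreover have "c * \<gamma> > 0"
    using c \<gamma>_pos by simp
  ultimately show ?thesis
    by linarith
qed

lemma eventually_dir_le_path_linear:
  assumes "linearly_decreasing l" and \<alpha>: "\<alpha> > 0"
  shows "\<forall>\<^sub>F B in at_top. L (((1 + \<alpha>) * B) *\<^sub>R wreg) \<le> L (wbar B)"
proof -
  define K where "K = Sup (path_slope ` {0<..})"
  have "(1 + \<alpha>) * K < K"
    using Sup_path_slope_neg[OF assms(1)] \<alpha> by (simp add: K_def mult_neg_pos)
  then obtain B1 where B1: "B1 > 0" "(1 + \<alpha>) * K < path_slope B1"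
    using less_cSup_iff[OF _ bdd_above_path_slope] by (auto simp: K_def)
  have "L (((1 + \<alpha>) * B) *\<^sub>R wreg) \<le> L (wbar B)" if B: "B \<ge> B1" for B
  proof -
    have "L (((1 + \<alpha>) * B) *\<^sub>R wreg) \<le> l 0 + (1 + \<alpha>) * B * K"
      using dir_loss_le_Sup_slope[of "(1 + \<alpha>) * B"] B B1 \<alpha> by (simp add: K_def)
    also have "\<dots> = l 0 + B * ((1 + \<alpha>) * K)"
      by simp
    also have "\<dots> \<le> l 0 + B * path_slope B"
      using B1 path_slope_mono[OF B1(1) B] B by (intro add_left_mono mult_left_mono) auto
    also have "\<dots> = L (wbar B)"
      using B B1 by (simp add: path_loss_eq)
    finally show ?thesis .
  qed
  then show ?thesis
    unfolding eventually_at_top_linorder by blast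
qed

text \<open>Compare \<open>wbar B\<close> with the feasible point \<open>(1 - \<delta>) wbar B + \<delta> B u\<close>: raising a small
  margin \<open>j\<close> by \<open>B \<delta> \<gamma> / 2\<close> gains at least as much as all other margins can lose.\<close>
lemma perturbation_bound:
  assumes B: "B > 0" and \<delta>: "0 < \<delta>" "\<delta> \<le> 1/2"
    and M: "0 \<le> M" "\<And>i. i < n \<Longrightarrow> \<gamma> < path_margin B i \<Longrightarrow> path_margin B i \<le> M"
    and j: "j < n" "path_margin B j \<le> \<gamma> / 2"
  shows "l (B * path_margin B j) - l (B * path_margin B j + B * \<delta> * \<gamma> / 2)
         \<le> n * (l (B * \<gamma> / 2) - l (B * \<gamma> / 2 + B * \<delta> * M))"
proof -
  define w' where "w' = (1 - \<delta>) *\<^sub>R wbar B + \<delta> *\<^sub>R (B *\<^sub>R u)"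
  define \<Delta> where "\<Delta> = l (B * \<gamma> / 2) - l (B * \<gamma> / 2 + B * \<delta> * M)"
  define G where "G = l (B * path_margin B j) - l (B * path_margin B j + B * \<delta> * \<gamma> / 2)"
  have "lp_norm p (B *\<^sub>R u) \<le> B"
    using lp_norm_scaleR[of p B u] p_gt_1 B u_norm by (simp add: mult_left_le)
  then have "lp_norm p w' \<le> B"
    using convexD[OF convex_lp_ball[of p B], of "wbar B" "B *\<^sub>R u" "1 - \<delta>" \<delta>]
      p_gt_1 path_norm_le B \<delta> by (simp add: w'_def)
  then have le: "(\<Sum>i<n. l (margin (wbar B) i)) \<le> (\<Sum>i<n. l (margin w' i))"
    using path_optimal B loss_le_iff by blast
  have w'_margin: "margin w' i = (1 - \<delta>) * (B * path_margin B i) + \<delta> * (B * margin u i)" for i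
    using B by (simp add: w'_def margin_add margin_scaleR margin_path)
  have "(\<Sum>i<n. l (margin w' i)) \<le> (\<Sum>i<n. l (margin (wbar B) i)) - G + n * \<Delta>"
  proof (rule sum_le_sum_gain)
    fix i assume i: "i < n"
    have "l ((1 - \<delta>) * (B * path_margin B i) + \<delta> * (B * margin u i)) - l (B * path_margin B i)
        \<le> l (B * \<gamma> / 2) - l (B * \<gamma> / 2 + \<delta> * (B * M))"
      using B \<gamma>_pos M u_margin[OF i] i
      by (intro antimono_convex_mix_increase_le[OF l_convex l_antimono \<delta>]) auto
    then show "l (margin w' i) \<le> l (margin (wbar B) i) + \<Delta>"
      using B by (simp add: w'_margin margin_path \<Delta>_def algebra_simps)
  next
    show "0 \<le> \<Delta>"
      using B \<delta> M by (simp add: \<Delta>_def l_mono)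
  next
    have "\<delta> * (\<gamma> / 2) \<le> \<delta> * (margin u j - path_margin B j)"
      using u_margin[OF j(1)] j \<delta> by (intro mult_left_mono) auto
    then have "B * (\<delta> * (\<gamma> / 2)) \<le> B * (\<delta> * (margin u j - path_margin B j))"
      by (rule mult_left_mono) (use B in simp)
    then have "B * path_margin B j + B * \<delta> * \<gamma> / 2 \<le> margin w' j"
      by (simp add: w'_margin algebra_simps)
    then show "l (margin w' j) \<le> l (margin (wbar B) j) - G"
      using B l_mono by (simp add: G_def margin_path)
  qed (use j in simp)
  with le show ?thesis
    by (simp add: G_def \<Delta>_def)
qed

lemma perturbation_chord_bound:
  assumes B: "B > 0" and \<delta>: "0 < \<delta>" "\<delta> \<le> 1/2"
    and M: "0 < M" "\<And>i. i < n \<Longrightarrow> path_margin B i \<le> M"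
    and j: "j < n" "path_margin B j \<le> \<gamma> / 2" and s: "0 \<le> s" "s < B * \<gamma> / 4"
  shows "(l (B * path_margin B j) - l (B * path_margin B j + B * \<delta> * \<gamma> / 2)) * (B * \<gamma> / 4 - s)
         \<le> n * ((l s - l (B * \<gamma> / 4)) * (B * \<delta> * M))"
proof -
  define X where "X = l (B * \<gamma> / 2) - l (B * \<gamma> / 2 + B * \<delta> * M)"
  have "l (B * path_margin B j) - l (B * path_margin B j + B * \<delta> * \<gamma> / 2) \<le> n * X"
    using perturbation_bound[OF B \<delta>] M j by (simp add: X_def less_imp_le)
  then have "(l (B * path_margin B j) - l (B * path_margin B j + B * \<delta> * \<gamma> / 2)) * (B * \<gamma> / 4 - s)
      \<le> n * (X * (B * \<gamma> / 4 - s))"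
    using s by (simp add: mult_right_mono)
  also have "\<dots> \<le> n * ((l s - l (B * \<gamma> / 4)) * (B * \<delta> * M))"
    using convex_on_drop_rate_mono[OF l_convex s(2), of "B * \<gamma> / 2" "B * \<gamma> / 2 + B * \<delta> * M"]
      B \<delta> M \<gamma>_pos by (intro mult_left_mono) (simp_all add: X_def)
  finally show ?thesis .
qed

lemma exists_pos_margin: "\<exists>i<n. margin wreg i > 0"
proof (rule ccontr)
  assume "\<not> (\<exists>i<n. margin wreg i > 0)"
  then have "margin wreg i < \<gamma> / 2" if "i < n" for i
    using that \<gamma>_pos not_less by fastforce
  then have "\<forall>\<^sub>F B in at_top. \<forall>i\<in>{..<n}. path_margin B i < \<gamma> / 2"
    by (intro eventually_ball_finite ballI order_tendstoD(2)[OF path_margin_tendsto]) auto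
  with eventually_gt_at_top[of 0] have "\<forall>\<^sub>F B in at_top. B > 0 \<and> (\<forall>i<n. path_margin B i < \<gamma> / 2)"
    by eventually_elim auto
  then obtain B where B: "B > 0" "\<And>i. i < n \<Longrightarrow> path_margin B i < \<gamma> / 2"
    using eventually_happens'[OF trivial_limit_at_top_linorder] by blast
  have "l (B * path_margin B 0) - l (B * path_margin B 0 + B * (1/2) * \<gamma> / 2)
      \<le> n * (l (B * \<gamma> / 2) - l (B * \<gamma> / 2 + B * (1/2) * 0))"
  proof (rule perturbation_bound[OF B(1)])
    show "path_margin B i \<le> 0" if "i < n" "\<gamma> < path_margin B i" for i
      using B(2)[OF that(1)] that(2) \<gamma>_pos by simp
    show "path_margin B 0 \<le> \<gamma> / 2"
      using B(2)[OF n_pos] by simp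
  qed (use n_pos in auto)
  moreover have "l (B * path_margin B 0 + B * (1/2) * \<gamma> / 2) < l (B * path_margin B 0)"
    using B \<gamma>_pos by (intro l_strict) simp
  ultimately show False
    by simp
qed

lemma negative_margin_drop_bound:
  fixes M \<delta> :: real
  assumes B: "B > 0" and M: "0 < M" "\<And>i. i < n \<Longrightarrow> path_margin B i \<le> M"
    and \<delta>: "0 < \<delta>" "\<delta> \<le> 1/2" and j: "j < n" "B * path_margin B j + B * \<delta> * \<gamma> / 2 \<le> 0"
  shows "(l 0 - l 1) * \<gamma> / (2 * n * M) * (B * \<gamma> / 4) \<le> l 0 - l (B * \<gamma> / 4)"
proof -
  let ?a = "B * path_margin B j" and ?t = "B * \<gamma> / 4"
  have "0 < B * \<delta> * \<gamma> / 2"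
    using B \<delta> \<gamma>_pos by simp
  then have "?a < 0"
    using j(2) by linarith
  then have "path_margin B j \<le> \<gamma> / 2"
    using B \<gamma>_pos by (simp add: mult_less_0_iff)
  have "(l 0 - l 1) * (B * \<delta> * \<gamma> / 2) \<le> l ?a - l (?a + B * \<delta> * \<gamma> / 2)"
    using convex_on_drop_rate_mono[OF l_convex, of ?a "?a + B * \<delta> * \<gamma> / 2" 0 1] j(2) \<open>0 < B * \<delta> * \<gamma> / 2\<close>
    by (simp add: mult.commute)
  then have "(l 0 - l 1) * (B * \<delta> * \<gamma> / 2) * (?t - 0) \<le> (l ?a - l (?a + B * \<delta> * \<gamma> / 2)) * (?t - 0)"
    using B \<gamma>_pos by (intro mult_right_mono) auto
  also have "\<dots> \<le> n * ((l 0 - l ?t) * (B * \<delta> * M))"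
    by (rule perturbation_chord_bound[OF B \<delta> M j(1) \<open>path_margin B j \<le> \<gamma> / 2\<close>]) (use B \<gamma>_pos in auto)
  finally have "(B * \<delta>) * ((l 0 - l 1) * \<gamma> / 2 * ?t) \<le> (B * \<delta>) * (n * M * (l 0 - l ?t))"
    by (simp add: algebra_simps)
  then have "(l 0 - l 1) * \<gamma> / 2 * ?t \<le> n * M * (l 0 - l ?t)"
    by (rule mult_left_le_imp_le) (use B \<delta> in simp)
  then show ?thesis
    using n_pos M by (simp add: field_simps)
qed

lemma margin_dir_nonneg:
  assumes not_lin: "\<not> linearly_decreasing l" and j: "j < n"
  shows "0 \<le> margin wreg j"
proof (rule ccontr)
  assume "\<not> 0 \<le> margin wreg j"
  define \<mu> where "\<mu> = - margin wreg j / 2"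
  have \<mu>: "\<mu> > 0" "margin wreg j < - \<mu>"
    using \<open>\<not> 0 \<le> margin wreg j\<close> by (auto simp: \<mu>_def)
  obtain M where M: "M > 0" and evM: "\<forall>\<^sub>F B in at_top. \<forall>i<n. path_margin B i \<le> M"
    using eventually_path_margin_le by blast
  define \<delta> where "\<delta> = min (1/2) (\<mu> / \<gamma>)"
  have \<delta>: "0 < \<delta>" "\<delta> \<le> 1/2" "\<delta> * \<gamma> \<le> \<mu>"
    using \<mu> \<gamma>_pos by (auto simp: \<delta>_def min_def field_simps)
  define c where "c = (l 0 - l 1) * \<gamma> / (2 * n * M)"
  have "\<forall>\<^sub>F B in at_top. c * (B * \<gamma> / 4) \<le> l 0 - l (B * \<gamma> / 4)"
    using eventually_gt_at_top[of 0] evM order_tendstoD(2)[OF path_margin_tendsto \<mu>(2)]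
  proof eventually_elim
    case (elim B)
    have "B * path_margin B j < B * (- \<mu>)"
      using elim by (intro mult_strict_left_mono) auto
    moreover have "B * \<delta> * \<gamma> \<le> B * \<mu>"
      using mult_left_mono[OF \<delta>(3), of B] elim by (simp add: mult.assoc)
    moreover have "0 < B * \<mu>"
      using elim \<mu> by simp
    ultimately have "B * path_margin B j + B * \<delta> * \<gamma> / 2 \<le> 0"
      by simp
    then show ?case
      unfolding c_def using negative_margin_drop_bound[OF _ M _ \<delta>(1,2) j] elim by auto
  qed
  from eventually_compose_filterlim[OF this filterlim_mult_const_at_top[of "4 / \<gamma>"]]
  have "\<forall>\<^sub>F t in at_top. c * t \<le> l 0 - l t"
    using \<gamma>_pos by simp
  moreover have "c > 0"
    using l_strict[of 0 1] \<gamma>_pos n_pos M by (simp add: c_def)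
  ultimately have "linearly_decreasing l"
    unfolding linearly_decreasing_def by blast
  with not_lin show False ..
qed

lemma zero_margin_drop_bound:
  fixes M r \<rho> :: real
  assumes B: "B > 0" and M: "0 < M" "\<And>i. i < n \<Longrightarrow> path_margin B i \<le> M"
    and j: "j < n" "path_margin B j \<le> \<rho> * \<gamma> / (4 * r)" and r: "r > 1" and \<rho>: "0 < \<rho>" "\<rho> \<le> 1"
  shows "ratio_drop l r (\<rho> * (B * \<gamma> / 4)) \<le> 2 * real n * M / \<gamma> * \<rho> * ratio_drop l r (B * \<gamma> / 4)"
proof -
  let ?t = "B * \<gamma> / 4" and ?a = "B * path_margin B j"
  define \<delta> where "\<delta> = \<rho> * (1 - 1 / r) / 2"
  have "0 < 1 - 1 / r" "1 - 1 / r \<le> 1"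
    using r by auto
  then have "0 < \<rho> * (1 - 1 / r)" "\<rho> * (1 - 1 / r) \<le> 1"
    using \<rho> mult_mono[of \<rho> 1 "1 - 1 / r" 1] by auto
  then have \<delta>: "0 < \<delta>" "\<delta> \<le> 1/2"
    by (auto simp: \<delta>_def)
  have "?t > 0"
    using B \<gamma>_pos by simp
  then have t_r: "0 < ?t / r" "?t / r < ?t"
    using r mult_strict_left_mono[of 1 r ?t] by (simp_all add: divide_less_eq)
  have "\<rho> * \<gamma> / (4 * r) \<le> \<gamma> / 2"
    using \<rho> r \<gamma>_pos by (simp add: field_simps)
  with j(2) have small: "path_margin B j \<le> \<gamma> / 2"
    by linarith
  have "ratio_drop l r (\<rho> * ?t) = l (B * (\<rho> * \<gamma> / (4 * r))) - l (B * (\<rho> * \<gamma> / (4 * r)) + B * \<delta> * \<gamma> / 2)"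
    using r by (simp add: ratio_drop_def \<delta>_def field_simps)
  also have "\<dots> \<le> l ?a - l (?a + B * \<delta> * \<gamma> / 2)"
    using B \<delta> \<gamma>_pos mult_left_mono[OF j(2), of B]
    by (intro convex_on_drop_shift_mono[OF l_convex]) auto
  finally have "ratio_drop l r (\<rho> * ?t) * (?t - ?t / r) \<le> (l ?a - l (?a + B * \<delta> * \<gamma> / 2)) * (?t - ?t / r)"
    using t_r by (simp add: mult_right_mono)
  also have "\<dots> \<le> n * ((l (?t / r) - l ?t) * (B * \<delta> * M))"
    by (rule perturbation_chord_bound[OF B \<delta> M j(1) small]) (use t_r in auto)
  also have "\<dots> = (2 * real n * M / \<gamma> * \<rho> * ratio_drop l r ?t) * (?t - ?t / r)"
    using \<gamma>_pos r by (simp add: ratio_drop_def \<delta>_def field_simps)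
  finally show ?thesis
    by (rule mult_right_le_imp_le) (use t_r in simp)
qed

text \<open>A vanishing limit margin lets the path raise that margin by \<open>B \<delta> \<gamma> / 2\<close> at the cost of
  the other margins, each of which stays below \<open>B M\<close>.\<close>
lemma ratio_drop_scaling:
  fixes M r \<rho> :: real
  assumes j: "j < n" "margin wreg j = 0"
    and M: "M > 0" "\<forall>\<^sub>F B in at_top. \<forall>i<n. path_margin B i \<le> M"
    and r: "r > 1" and \<rho>: "0 < \<rho>" "\<rho> \<le> 1"
  shows "\<forall>\<^sub>F t in at_top. ratio_drop l r (\<rho> * t) \<le> 2 * real n * M / \<gamma> * \<rho> * ratio_drop l r t"
proof -
  have "margin wreg j < \<rho> * \<gamma> / (4 * r)"
    using j \<rho> \<gamma>_pos r by simp
  from eventually_gt_at_top[of 0] M(2) order_tendstoD(2)[OF path_margin_tendsto this]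
  have "\<forall>\<^sub>F B in at_top.
      ratio_drop l r (\<rho> * (B * \<gamma> / 4)) \<le> 2 * real n * M / \<gamma> * \<rho> * ratio_drop l r (B * \<gamma> / 4)"
  proof eventually_elim
    case (elim B)
    show ?case
      by (rule zero_margin_drop_bound) (use elim j M r \<rho> in auto)
  qed
  from eventually_compose_filterlim[OF this filterlim_mult_const_at_top[of "4 / \<gamma>"]]
  show ?thesis
    using \<gamma>_pos by simp
qed

lemma eventually_dir_le_path_zero:
  assumes nonneg: "\<And>i. i < n \<Longrightarrow> 0 \<le> margin wreg i" and j: "j < n" "margin wreg j = 0"
    and \<alpha>: "\<alpha> > 0"
  shows "\<forall>\<^sub>F B in at_top. L (((1 + \<alpha>) * B) *\<^sub>R wreg) \<le> L (wbar B)"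
proof -
  obtain i0 where i0: "i0 < n" "margin wreg i0 > 0"
    using exists_pos_margin by blast
  obtain M where M: "M > 0" "\<forall>\<^sub>F B in at_top. \<forall>i<n. path_margin B i \<le> M"
    using eventually_path_margin_le by blast
  define c1 where "c1 = (1 + \<alpha> / 2) * margin wreg i0"
  define c2 where "c2 = (1 + \<alpha>) * margin wreg i0"
  have c: "0 < c1" "c1 < c2" "margin wreg i0 < c1"
    using i0 \<alpha> by (simp_all add: c1_def c2_def)
  have K: "2 * real n * M / \<gamma> > 0"
    using M \<gamma>_pos n_pos by simp
  have "\<exists>\<eta>>0. \<forall>\<^sub>F B in at_top. n * (l 0 - l (\<eta> * B)) \<le> l (c1 * B) - l (c2 * B)"
    by (rule scaling_ratio_drop_dominates[OF l_convex l_antimono l_strict K _ c(1,2)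
        ratio_drop_scaling[OF j M]]) (use n_pos in auto)
  then obtain \<eta> where \<eta>: "\<eta> > 0"
    and dominated: "\<forall>\<^sub>F B in at_top. n * (l 0 - l (\<eta> * B)) \<le> l (c1 * B) - l (c2 * B)"
    by blast
  have "margin wreg i < (if margin wreg i = 0 then \<eta> else (1 + \<alpha>) * margin wreg i)" if "i < n" for i
    using nonneg[OF that] \<eta> \<alpha> by (auto simp: less_le)
  then have "\<forall>\<^sub>F B in at_top. \<forall>i\<in>{..<n}.
      path_margin B i < (if margin wreg i = 0 then \<eta> else (1 + \<alpha>) * margin wreg i)"
    by (intro eventually_ball_finite ballI order_tendstoD(2)[OF path_margin_tendsto]) auto
  with dominated eventually_gt_at_top[of 0] order_tendstoD(2)[OF path_margin_tendsto c(3)]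
  show ?thesis
  proof eventually_elim
    case (elim B)
    show ?case
    proof (rule dir_loss_le_path_loss[OF elim(2) \<eta> _ _ i0(1)])
      show "path_margin B i \<le> \<eta>" if "i < n" "margin wreg i = 0" for i
        using bspec[OF elim(4), of i] that by simp
      show "path_margin B i \<le> (1 + \<alpha>) * margin wreg i" if "i < n" "margin wreg i \<noteq> 0" for i
        using bspec[OF elim(4), of i] that by simp
      show "path_margin B i0 \<le> c1"
        using elim(3) by simp
      show "n * (l 0 - l (\<eta> * B)) \<le> l (c1 * B) - l ((1 + \<alpha>) * margin wreg i0 * B)"
        using elim(1) by (simp add: c2_def)
    qed
  qed
qed

lemma eventually_dir_le_path:
  assumes \<alpha>: "\<alpha> > 0"
  shows "\<forall>\<^sub>F B in at_top. L (((1 + \<alpha>) * B) *\<^sub>R wreg) \<le> L (wbar B)"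
proof (cases "linearly_decreasing l")
  case True
  then show ?thesis
    using eventually_dir_le_path_linear \<alpha> by blast
next
  case False
  then have nonneg: "\<And>i. i < n \<Longrightarrow> 0 \<le> margin wreg i"
    using margin_dir_nonneg by blast
  show ?thesis
  proof (cases "\<forall>i<n. margin wreg i > 0")
    case True
    then show ?thesis
      using eventually_dir_le_path_pos \<alpha> by blast
  next
    case False
    then obtain j where "j < n" "\<not> margin wreg j > 0"
      by blast
    with nonneg[of j] have "j < n" "margin wreg j = 0"
      by simp_all
    then show ?thesis
      using eventually_dir_le_path_zero nonneg \<alpha> by blast
  qed
qed

end

theorem lemma4:
  fixes p q C :: real and n :: nat
    and x :: "nat \<Rightarrow> real ^ 'd" and y :: "nat \<Rightarrow> real"
    and l :: "real \<Rightarrow> real"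
    and wbar :: "real \<Rightarrow> real ^ 'd" and wreg :: "real ^ 'd"
  assumes p_gt: "p > 1"
    and conj: "1 / p + 1 / q = 1"
    and labels: "\<forall>i<n. y i \<in> {-1, 1}"
    and sep: "lin_separable n x y"
    and bound: "\<forall>i<n. lp_norm q (x i) < C"
    and decr: "antimono l"
    and cvx: "convex_on UNIV l"
    and no_min: "\<forall>t. \<exists>s. l s < l t"
    and inf0: "(INF t. l t) = 0"
    and path: "is_reg_path p (emp_loss l n x y) wbar"
    and dir: "((\<lambda>B. (1 / B) *\<^sub>R wbar B) \<longlongrightarrow> wreg) at_top"
  shows "\<forall>\<alpha>>0. \<exists>r. \<forall>w :: real ^ 'd. lp_norm p w > r \<longrightarrow>
           emp_loss l n x y (((1 + \<alpha>) * lp_norm p w) *\<^sub>R wreg) \<le> emp_loss l n x y w"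
proof (intro allI impI)
  \<comment> \<open>\<open>conj\<close>, \<open>labels\<close>, \<open>bound\<close> and \<open>inf0\<close> are not needed; in particular \<open>l\<close> may be
    unbounded below (then \<open>inf0\<close> only constrains a junk value of \<open>INF\<close>).\<close>
  fix \<alpha> :: real assume \<alpha>: "\<alpha> > 0"
  show "\<exists>r. \<forall>w :: real ^ 'd. lp_norm p w > r \<longrightarrow>
      emp_loss l n x y (((1 + \<alpha>) * lp_norm p w) *\<^sub>R wreg) \<le> emp_loss l n x y w"
  proof (cases "n = 0")
    case True
    then show ?thesis
      by (simp add: emp_loss_def)
  next
    case False
    interpret reg_path_setting p n x y l wbar wreg
      using p_gt False decr cvx no_min path dir by unfold_locales auto
    obtain u \<gamma> where "lp_norm p u \<le> 1" "\<gamma> > 0" "\<And>i. i < n \<Longrightarrow> \<gamma> \<le> margin u i"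
      using separator[OF sep] by blast
    then interpret separated_reg_path p n x y l wbar wreg u \<gamma>
      by unfold_locales
    from eventually_dir_le_path[OF \<alpha>]
    show ?thesis
      by (rule eventually_dir_le_path_imp)
  qed
qed

end
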